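(* Let $T_1,T_2$ be tables joined on column $J$, where $T_1$ has a real-valued column $W$. Let $0<p_1,q_1,p_2,q_2\le1$, $S_1=\mathrm{UBS}_{p_1,q_1}(T_1,J)$, $S_2=\mathrm{UBS}_{p_2,q_2}(T_2,J)$, $p=\min\{p_1,p_2\}$, and $\hat J_{\mathrm{sum}}=\frac{1}{pq_1q_2}\sum_{(t_1,t_2)\in S_1\bowtie_J S_2}t_1.W$. Then $$\mathrm{Var}[\hat J_{\mathrm{sum}}]=\frac{1-q_2}{pq_2}\beta_1+\frac{1-q_1}{pq_1}\beta_2+\frac{(1-q_1)(1-q_2)}{pq_1q_2}\beta_3+\frac{1-p}{p}\beta_4,$$ where $\beta_1=\sum_v a_v^2\mu_v^2b_v$, $\beta_2=\sum_v a_v(\mu_v^2+\sigma_v^2)b_v^2$, $\beta_3=\sum_v a_v(\mu_v^2+\sigma_v^2)b_v$, $\beta_4=\sum_v a_v^2\mu_v^2b_v^2$.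
   Context: $T_1,T_2$ are finite multisets of tuples with a join attribute $J$ taking values in a finite set $\mathcal U$; $a_v$ (resp. $b_v$) is the number of tuples of $T_1$ (resp. $T_2$) with $J$-value $v$. For each $v$ with $a_v>0$, $\mu_v$ and $\sigma_v^2$ are the mean and (population) variance of the $W$-values of the $a_v$ tuples of $T_1$ with $J$-value $v$ (so $a_v(\mu_v^2+\sigma_v^2)$ is the sum of their squared $W$-values); terms with $a_v=0$ contribute $0$. $X\bowtie_J Y$ is the set of pairs $(t_1,t_2)\in X\times Y$ with $t_1.J=t_2.J$. $\mathrm{UBS}_{p,q}(T,J)$: given a hash function $h:\mathcal U\to[0,1]$, each tuple $t\in T$ with $h(t.J)<p$ is included independently with probability $q$; others are excluded. The values $h(v)$ are independent uniform on $[0,1]$, the same $h$ is used for both tables, and the Bernoulli coins are independent across all tuples and independent of $h$. *)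

theory Defs
  imports "HOL-Probability.Probability"
begin

text \<open>Tables are finite index sets of tuple identifiers (so duplicates are allowed,
  as for multisets); J1, J2 give the join attribute, W the real column of T1.\<close>

text \<open>Outcome of the random experiment: the hash function h (values on U),
  the Bernoulli coins of the tuples of T1 and those of T2.\<close>

definition ubs_model ::
  "'u set \<Rightarrow> 'i set \<Rightarrow> 'k set \<Rightarrow> real \<Rightarrow> real
    \<Rightarrow> (('u \<Rightarrow> real) \<times> ('i \<Rightarrow> bool) \<times> ('k \<Rightarrow> bool)) measure" where
  "ubs_model U I1 I2 q1 q2 =
     (PiM U (\<lambda>_. uniform_measure lborel {0..1::real}))
       \<Otimes>\<^sub>M ((PiM I1 (\<lambda>_. measure_pmf (bernoulli_pmf q1)))
       \<Otimes>\<^sub>M (PiM I2 (\<lambda>_. measure_pmf (bernoulli_pmf q2))))"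

definition UBS :: "real \<Rightarrow> ('u \<Rightarrow> real) \<Rightarrow> ('i \<Rightarrow> bool) \<Rightarrow> 'i set \<Rightarrow> ('i \<Rightarrow> 'u) \<Rightarrow> 'i set" where
  "UBS p h c T J = {t \<in> T. h (J t) < p \<and> c t}"

definition join :: "'i set \<Rightarrow> ('i \<Rightarrow> 'u) \<Rightarrow> 'k set \<Rightarrow> ('k \<Rightarrow> 'u) \<Rightarrow> ('i \<times> 'k) set" where
  "join X J1 Y J2 = {(t1, t2) \<in> X \<times> Y. J1 t1 = J2 t2}"

definition cnt :: "'i set \<Rightarrow> ('i \<Rightarrow> 'u) \<Rightarrow> 'u \<Rightarrow> real" where
  "cnt T J v = real (card {t \<in> T. J t = v})"

definition grp_mean :: "'i set \<Rightarrow> ('i \<Rightarrow> 'u) \<Rightarrow> ('i \<Rightarrow> real) \<Rightarrow> 'u \<Rightarrow> real" where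
  "grp_mean T J W v = (\<Sum>t\<in>{t \<in> T. J t = v}. W t) / cnt T J v"

text \<open>population variance (0 for empty groups, where all terms vanish anyway)\<close>
definition grp_var :: "'i set \<Rightarrow> ('i \<Rightarrow> 'u) \<Rightarrow> ('i \<Rightarrow> real) \<Rightarrow> 'u \<Rightarrow> real" where
  "grp_var T J W v = (\<Sum>t\<in>{t \<in> T. J t = v}. (W t - grp_mean T J W v)\<^sup>2) / cnt T J v"

end

theory Submission
  imports Defs
begin

text \<open>Grouping the pairs of the join by their join value v, the join sum becomes
  \<Sum>v. [h v < p] * X v * Y v with p = min p1 p2 (both samples use the same h), where X v is the
  W-sum of the coin-selected tuples of T1 with value v and Y v the number of coin-selected tuples
  of T2 with value v. The three factors live on independent components of the sample space, and
  the terms for v \<noteq> w depend on disjoint sets of hash values and coins, so they are uncorrelated.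
  Hence the variance is the sum over v of the variances of the single terms, which follow from the
  first two moments of [h v < p], X v and Y v.\<close>

lemma (in pair_sigma_finite) integrable_pair_measure_mult:
  fixes f :: "'a \<Rightarrow> real" and g :: "'b \<Rightarrow> real"
  assumes f: "integrable M1 f" and g: "integrable M2 g"
  shows "integrable (M1 \<Otimes>\<^sub>M M2) (\<lambda>z. f (fst z) * g (snd z))"
proof (unfold integrable_iff_bounded, intro conjI)
  have [measurable]: "f \<in> borel_measurable M1" "g \<in> borel_measurable M2"
    using f g by auto
  show "(\<lambda>z. f (fst z) * g (snd z)) \<in> borel_measurable (M1 \<Otimes>\<^sub>M M2)"
    by measurable
  have "(\<integral>\<^sup>+z. ennreal (norm (f (fst z) * g (snd z))) \<partial>(M1 \<Otimes>\<^sub>M M2))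
      = (\<integral>\<^sup>+x. (\<integral>\<^sup>+y. ennreal (norm (f x)) * ennreal (norm (g y)) \<partial>M2) \<partial>M1)"
    by (subst M2.nn_integral_fst[symmetric]) (auto simp: abs_mult ennreal_mult)
  also have "\<dots> = (\<integral>\<^sup>+x. ennreal (norm (f x)) \<partial>M1) * (\<integral>\<^sup>+y. ennreal (norm (g y)) \<partial>M2)"
    by (simp add: nn_integral_cmult nn_integral_multc)
  also have "\<dots> < \<infinity>"
    using f g by (simp add: integrable_iff_bounded ennreal_mult_less_top)
  finally show "(\<integral>\<^sup>+z. ennreal (norm (f (fst z) * g (snd z))) \<partial>(M1 \<Otimes>\<^sub>M M2)) < \<infinity>" .
qed

lemma (in pair_sigma_finite) integral_pair_measure_mult:
  fixes f :: "'a \<Rightarrow> real" and g :: "'b \<Rightarrow> real"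
  assumes "integrable M1 f" "integrable M2 g"
  shows "(\<integral>z. f (fst z) * g (snd z) \<partial>(M1 \<Otimes>\<^sub>M M2)) = integral\<^sup>L M1 f * integral\<^sup>L M2 g"
  using integral_fst'[OF integrable_pair_measure_mult[OF assms]] by simp

lemma integrable_PiM_prod_iid:
  fixes f :: "'a \<Rightarrow> real"
  assumes "prob_space N" "finite I" "S \<subseteq> I" "integrable N f"
  shows "integrable (PiM I (\<lambda>_. N)) (\<lambda>x. \<Prod>i\<in>S. f (x i))"
proof -
  interpret N: prob_space N by fact
  interpret product_prob_space "\<lambda>_. N" by unfold_locales
  have "(\<lambda>x. \<Prod>i\<in>S. f (x i)) = (\<lambda>x. \<Prod>i\<in>I. (if i \<in> S then f else (\<lambda>_. 1)) (x i))"
    using assms(2,3) by (simp add: if_distrib[of "\<lambda>g. g _"] prod.inter_restrict[symmetric] Int_absorb1)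
  moreover have "integrable (PiM I (\<lambda>_. N)) (\<lambda>x. \<Prod>i\<in>I. (if i \<in> S then f else (\<lambda>_. 1)) (x i))"
    using assms by (intro product_integrable_prod) auto
  ultimately show ?thesis
    by simp
qed

lemma integral_PiM_prod_iid:
  fixes f :: "'a \<Rightarrow> real"
  assumes "prob_space N" "finite I" "S \<subseteq> I" "integrable N f"
  shows "(\<integral>x. (\<Prod>i\<in>S. f (x i)) \<partial>PiM I (\<lambda>_. N)) = integral\<^sup>L N f ^ card S"
proof -
  interpret N: prob_space N by fact
  interpret product_prob_space "\<lambda>_. N" by unfold_locales
  have "(\<integral>x. (\<Prod>i\<in>S. f (x i)) \<partial>PiM I (\<lambda>_. N))
      = (\<integral>x. (\<Prod>i\<in>I. (if i \<in> S then f else (\<lambda>_. 1)) (x i)) \<partial>PiM I (\<lambda>_. N))"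
    using assms(2,3) by (simp add: if_distrib[of "\<lambda>g. g _"] prod.inter_restrict[symmetric] Int_absorb1)
  also have "\<dots> = (\<Prod>i\<in>I. integral\<^sup>L N (if i \<in> S then f else (\<lambda>_. 1)))"
    using assms by (intro product_integral_prod) auto
  also have "\<dots> = (\<Prod>i\<in>I. if i \<in> S then integral\<^sup>L N f else 1)"
    by (intro prod.cong) (auto simp: N.prob_space)
  also have "\<dots> = integral\<^sup>L N f ^ card S"
    using assms by (simp add: prod.inter_restrict[symmetric] Int_absorb1)
  finally show ?thesis .
qed

lemma
  fixes x :: "'i \<Rightarrow> real"
  assumes "prob_space N" "finite I" "A \<subseteq> I" "E \<in> sets N"
  shows integrable_PiM_indicator_sum:
      "integrable (PiM I (\<lambda>_. N)) (\<lambda>c. \<Sum>t\<in>A. x t * indicator E (c t))"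
    and integral_PiM_indicator_sum:
      "(\<integral>c. (\<Sum>t\<in>A. x t * indicator E (c t)) \<partial>PiM I (\<lambda>_. N)) = measure N E * sum x A"
proof -
  interpret N: prob_space N by fact
  have indicator_integrable: "integrable N (indicator E :: _ \<Rightarrow> real)"
    using assms(4) by (simp add: less_top[symmetric])
  have "integrable (PiM I (\<lambda>_. N)) (\<lambda>c. indicator E (c t) :: real)"
    and "(\<integral>c. indicator E (c t) \<partial>PiM I (\<lambda>_. N)) = measure N E" if "t \<in> A" for t
    using integrable_PiM_prod_iid[OF assms(1,2) _ indicator_integrable, of "{t}"]
      integral_PiM_prod_iid[OF assms(1,2) _ indicator_integrable, of "{t}"]
      assms(3,4) that by auto
  then show "integrable (PiM I (\<lambda>_. N)) (\<lambda>c. \<Sum>t\<in>A. x t * indicator E (c t))"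
    and "(\<integral>c. (\<Sum>t\<in>A. x t * indicator E (c t)) \<partial>PiM I (\<lambda>_. N)) = measure N E * sum x A"
    by (auto simp: sum_distrib_right mult.commute intro!: sum.cong)
qed

lemma sum_product_if_eq:
  fixes x y :: "'i \<Rightarrow> 'a::comm_ring"
  assumes "finite A" "finite B"
  shows "(\<Sum>t\<in>A. \<Sum>s\<in>B. x t * y s * (if t = s then d else e))
    = e * (sum x A * sum y B) + (d - e) * (\<Sum>t\<in>A \<inter> B. x t * y t)"
proof -
  have "(\<Sum>t\<in>A. \<Sum>s\<in>B. x t * y s * (if t = s then d else e))
      = (\<Sum>t\<in>A. \<Sum>s\<in>B. e * (x t * y s) + (if t = s then (d - e) * (x t * y t) else 0))"
    by (intro sum.cong) (auto simp: algebra_simps)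
  also have "\<dots> = e * (sum x A * sum y B) + (\<Sum>t\<in>A. if t \<in> B then (d - e) * (x t * y t) else 0)"
    using assms by (simp add: sum.distrib sum.delta sum_product flip: sum_distrib_left)
  also have "\<dots> = e * (sum x A * sum y B) + (d - e) * (\<Sum>t\<in>A \<inter> B. x t * y t)"
    using assms by (auto simp: sum.inter_restrict sum_distrib_left intro!: sum.cong)
  finally show ?thesis .
qed

lemma
  fixes x y :: "'i \<Rightarrow> real"
  assumes "prob_space N" "finite I" "A \<subseteq> I" "B \<subseteq> I" "E \<in> sets N"
  defines "r \<equiv> measure N E"
  shows integrable_PiM_indicator_sum_mult:
      "integrable (PiM I (\<lambda>_. N))
         (\<lambda>c. (\<Sum>t\<in>A. x t * indicator E (c t)) * (\<Sum>s\<in>B. y s * indicator E (c s)))"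
    and integral_PiM_indicator_sum_mult:
      "(\<integral>c. (\<Sum>t\<in>A. x t * indicator E (c t)) * (\<Sum>s\<in>B. y s * indicator E (c s)) \<partial>PiM I (\<lambda>_. N))
         = r\<^sup>2 * (sum x A * sum y B) + (r - r\<^sup>2) * (\<Sum>t\<in>A \<inter> B. x t * y t)"
proof -
  interpret N: prob_space N by fact
  have fin: "finite A" "finite B"
    using assms finite_subset by auto
  have indicator_integrable: "integrable N (indicator E :: _ \<Rightarrow> real)"
    using assms(5) by (simp add: less_top[symmetric])
  have pair: "indicator E (c t) * indicator E (c s) = (\<Prod>i\<in>{t, s}. indicator E (c i) :: real)" for c t s
    by (cases "t = s") (auto simp: indicator_def)
  have expand: "(\<Sum>t\<in>A. x t * indicator E (c t)) * (\<Sum>s\<in>B. y s * indicator E (c s))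
      = (\<Sum>t\<in>A. \<Sum>s\<in>B. x t * y s * (\<Prod>i\<in>{t, s}. indicator E (c i)))" for c
    by (simp add: sum_product pair[symmetric] mult_ac)
  have pair_integrable: "integrable (PiM I (\<lambda>_. N)) (\<lambda>c. \<Prod>i\<in>{t, s}. indicator E (c i) :: real)"
    and pair_moment: "(\<integral>c. (\<Prod>i\<in>{t, s}. indicator E (c i) :: real) \<partial>PiM I (\<lambda>_. N))
      = (if t = s then r else r\<^sup>2)"
    if "t \<in> A" "s \<in> B" for t s
  proof -
    have ts: "{t, s} \<subseteq> I"
      using assms(3,4) that by auto
    show "integrable (PiM I (\<lambda>_. N)) (\<lambda>c. \<Prod>i\<in>{t, s}. indicator E (c i) :: real)"
      by (rule integrable_PiM_prod_iid[OF assms(1,2) ts indicator_integrable])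
    show "(\<integral>c. (\<Prod>i\<in>{t, s}. indicator E (c i) :: real) \<partial>PiM I (\<lambda>_. N)) = (if t = s then r else r\<^sup>2)"
      using integral_PiM_prod_iid[OF assms(1,2) ts indicator_integrable] assms(5)
      by (simp add: r_def card_insert_if power2_eq_square)
  qed
  show "integrable (PiM I (\<lambda>_. N))
      (\<lambda>c. (\<Sum>t\<in>A. x t * indicator E (c t)) * (\<Sum>s\<in>B. y s * indicator E (c s)))"
    unfolding expand using pair_integrable by auto
  have "(\<integral>c. (\<Sum>t\<in>A. x t * indicator E (c t)) * (\<Sum>s\<in>B. y s * indicator E (c s)) \<partial>PiM I (\<lambda>_. N))
      = (\<Sum>t\<in>A. \<Sum>s\<in>B. x t * y s * (if t = s then r else r\<^sup>2))"
    unfolding expand using pair_integrable pair_moment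
    by (simp add: Bochner_Integration.integral_sum Bochner_Integration.integrable_sum)
  also have "\<dots> = r\<^sup>2 * (sum x A * sum y B) + (r - r\<^sup>2) * (\<Sum>t\<in>A \<inter> B. x t * y t)"
    using fin by (rule sum_product_if_eq)
  finally show "(\<integral>c. (\<Sum>t\<in>A. x t * indicator E (c t)) * (\<Sum>s\<in>B. y s * indicator E (c s)) \<partial>PiM I (\<lambda>_. N))
         = r\<^sup>2 * (sum x A * sum y B) + (r - r\<^sup>2) * (\<Sum>t\<in>A \<inter> B. x t * y t)" .
qed

lemma (in prob_space) variance_const_mult:
  fixes X :: "'a \<Rightarrow> real"
  shows "variance (\<lambda>x. c * X x) = c\<^sup>2 * variance X"
  by (simp add: power_mult_distrib flip: right_diff_distrib)

lemma (in prob_space) variance_sum_uncorrelated: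
  fixes Z :: "'i \<Rightarrow> 'a \<Rightarrow> real"
  assumes "finite V"
    and Z_integrable: "\<And>v. v \<in> V \<Longrightarrow> integrable M (Z v)"
    and Z_mult_integrable: "\<And>v w. v \<in> V \<Longrightarrow> w \<in> V \<Longrightarrow> integrable M (\<lambda>x. Z v x * Z w x)"
    and uncorrelated: "\<And>v w. v \<in> V \<Longrightarrow> w \<in> V \<Longrightarrow> v \<noteq> w \<Longrightarrow>
      expectation (\<lambda>x. Z v x * Z w x) = expectation (Z v) * expectation (Z w)"
  shows "variance (\<lambda>x. \<Sum>v\<in>V. Z v x) = (\<Sum>v\<in>V. variance (Z v))"
proof -
  define D where "D v w = expectation (\<lambda>x. Z v x * Z w x) - expectation (Z v) * expectation (Z w)"
    for v w
  have square: "(\<lambda>x. (\<Sum>v\<in>V. Z v x)\<^sup>2) = (\<lambda>x. \<Sum>v\<in>V. \<Sum>w\<in>V. Z v x * Z w x)"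
    by (simp add: power2_eq_square sum_product)
  have "variance (\<lambda>x. \<Sum>v\<in>V. Z v x)
      = expectation (\<lambda>x. (\<Sum>v\<in>V. Z v x)\<^sup>2) - (expectation (\<lambda>x. \<Sum>v\<in>V. Z v x))\<^sup>2"
    by (rule variance_eq) (auto simp: square Z_integrable Z_mult_integrable)
  also have "\<dots> = (\<Sum>v\<in>V. \<Sum>w\<in>V. D v w)"
    by (simp add: square D_def Z_integrable Z_mult_integrable power2_eq_square sum_product sum_subtractf)
  also have "\<dots> = (\<Sum>v\<in>V. D v v)"
  proof (rule sum.cong[OF refl])
    fix v assume "v \<in> V"
    then have "(\<Sum>w\<in>V. D v w) = (\<Sum>w\<in>V. if w = v then D v v else 0)"
      by (intro sum.cong) (auto simp: D_def uncorrelated)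
    then show "(\<Sum>w\<in>V. D v w) = D v v"
      using \<open>finite V\<close> \<open>v \<in> V\<close> by simp
  qed
  also have "\<dots> = (\<Sum>v\<in>V. variance (Z v))"
    using variance_eq[OF Z_integrable] Z_mult_integrable by (simp add: D_def power2_eq_square)
  finally show ?thesis .
qed

definition group_sum :: "'i set \<Rightarrow> ('i \<Rightarrow> 'u) \<Rightarrow> ('i \<Rightarrow> real) \<Rightarrow> 'u \<Rightarrow> real" where
  "group_sum T J f v = (\<Sum>t\<in>{t \<in> T. J t = v}. f t)"

lemma sum_join_mult:
  fixes f :: "'i \<Rightarrow> real" and g :: "'k \<Rightarrow> real"
  assumes "finite U" "finite X" "finite Y" "J1 ` X \<subseteq> U"
  shows "(\<Sum>(t1, t2)\<in>join X J1 Y J2. f t1 * g t2) = (\<Sum>v\<in>U. group_sum X J1 f v * group_sum Y J2 g v)"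
proof -
  have fin: "finite (join X J1 Y J2)"
    using assms(2,3) by (rule finite_subset[rotated, OF finite_cartesian_product]) (auto simp: join_def)
  have groups: "{z \<in> join X J1 Y J2. J1 (fst z) = v} = {t \<in> X. J1 t = v} \<times> {t \<in> Y. J2 t = v}" for v
    by (auto simp: join_def)
  have "(\<Sum>(t1, t2)\<in>join X J1 Y J2. f t1 * g t2)
      = (\<Sum>v\<in>U. \<Sum>(t1, t2)\<in>{z \<in> join X J1 Y J2. J1 (fst z) = v}. f t1 * g t2)"
    using assms(1,4) fin by (intro sum.group[symmetric]) (auto simp: join_def)
  also have "\<dots> = (\<Sum>v\<in>U. group_sum X J1 f v * group_sum Y J2 g v)"
    by (simp add: groups group_sum_def sum_product sum.cartesian_product)
  finally show ?thesis .
qed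

lemma group_sum_UBS:
  assumes "finite T"
  shows "group_sum (UBS p h c T J) J f v
    = of_bool (h v < p) * group_sum T J (\<lambda>t. f t * of_bool (c t)) v"
proof -
  have selected: "{t \<in> UBS p h c T J. J t = v} = {t \<in> {t \<in> T. J t = v}. h v < p \<and> c t}"
    by (auto simp: UBS_def)
  have "group_sum (UBS p h c T J) J f v = (\<Sum>t\<in>{t \<in> T. J t = v}. if h v < p \<and> c t then f t else 0)"
    unfolding group_sum_def selected by (rule sum.inter_filter) (simp add: assms)
  also have "\<dots> = of_bool (h v < p) * group_sum T J (\<lambda>t. f t * of_bool (c t)) v"
    by (auto simp: group_sum_def sum_distrib_left intro!: sum.cong)
  finally show ?thesis .
qed

lemma sum_join_UBS:
  assumes "finite U" "finite T1" "finite T2" "J1 ` T1 \<subseteq> U"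
  shows "(\<Sum>(t1, t2)\<in>join (UBS p1 h c1 T1 J1) J1 (UBS p2 h c2 T2 J2) J2. W t1)
    = (\<Sum>v\<in>U. of_bool (h v < min p1 p2) * group_sum T1 J1 (\<lambda>t. W t * of_bool (c1 t)) v
                 * group_sum T2 J2 (\<lambda>t. of_bool (c2 t)) v)"
proof -
  have "(\<Sum>(t1, t2)\<in>join (UBS p1 h c1 T1 J1) J1 (UBS p2 h c2 T2 J2) J2. W t1)
      = (\<Sum>(t1, t2)\<in>join (UBS p1 h c1 T1 J1) J1 (UBS p2 h c2 T2 J2) J2. W t1 * 1)"
    by simp
  also have "\<dots> = (\<Sum>v\<in>U. group_sum (UBS p1 h c1 T1 J1) J1 W v
                        * group_sum (UBS p2 h c2 T2 J2) J2 (\<lambda>_. 1) v)"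
    using assms by (intro sum_join_mult) (auto simp: UBS_def)
  also have "\<dots> = (\<Sum>v\<in>U. of_bool (h v < min p1 p2) * group_sum T1 J1 (\<lambda>t. W t * of_bool (c1 t)) v
                 * group_sum T2 J2 (\<lambda>t. of_bool (c2 t)) v)"
    using assms by (simp add: group_sum_UBS of_bool_conj mult_ac)
  finally show ?thesis .
qed

lemma cnt_eq_group_sum: "cnt T J v = group_sum T J (\<lambda>_. 1) v"
  by (simp add: cnt_def group_sum_def)

lemma cnt_mult_grp_mean:
  assumes "finite T"
  shows "cnt T J v * grp_mean T J W v = group_sum T J W v"
proof (cases "cnt T J v = 0")
  case True
  then have empty: "{t \<in> T. J t = v} = {}"
    using assms by (simp add: cnt_def)
  show ?thesis
    using True unfolding group_sum_def empty by simp
next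
  case False
  then show ?thesis
    by (simp add: grp_mean_def group_sum_def)
qed

lemma cnt_mult_grp_second_moment:
  assumes "finite T"
  shows "cnt T J v * ((grp_mean T J W v)\<^sup>2 + grp_var T J W v) = group_sum T J (\<lambda>t. (W t)\<^sup>2) v"
proof (cases "cnt T J v = 0")
  case True
  then have empty: "{t \<in> T. J t = v} = {}"
    using assms by (simp add: cnt_def)
  show ?thesis
    using True unfolding group_sum_def empty by simp
next
  case False
  let ?m = "grp_mean T J W v"
  have "cnt T J v * grp_var T J W v = (\<Sum>t\<in>{t \<in> T. J t = v}. (W t - ?m)\<^sup>2)"
    using False by (simp add: grp_var_def)
  also have "\<dots> = group_sum T J (\<lambda>t. (W t)\<^sup>2) v - 2 * ?m * group_sum T J W v + cnt T J v * ?m\<^sup>2"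
    by (simp add: group_sum_def cnt_def power2_diff sum.distrib sum_subtractf sum_distrib_left mult_ac)
  finally show ?thesis
    by (simp add: cnt_mult_grp_mean[OF assms, symmetric] algebra_simps power2_eq_square)
qed

abbreviation hash_space :: "'u set \<Rightarrow> ('u \<Rightarrow> real) measure" where
  "hash_space U \<equiv> PiM U (\<lambda>_. uniform_measure lborel {0..1::real})"

abbreviation coin_space :: "'i set \<Rightarrow> real \<Rightarrow> ('i \<Rightarrow> bool) measure" where
  "coin_space I q \<equiv> PiM I (\<lambda>_. measure_pmf (bernoulli_pmf q))"

lemma prob_space_unit_interval: "prob_space (uniform_measure lborel {0..1::real})"
  by (rule prob_space_uniform_measure) simp_all

lemma prob_space_hash_space: "prob_space (hash_space U)"
  by (intro prob_space_PiM prob_space_unit_interval)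

lemma prob_space_coin_space: "prob_space (coin_space I q)"
  by (intro prob_space_PiM prob_space_measure_pmf)

lemma prob_space_ubs_model: "prob_space (ubs_model U I1 I2 q1 q2)"
  unfolding ubs_model_def by (intro prob_space_pair prob_space_hash_space prob_space_coin_space)

lemma
  fixes f :: "('u \<Rightarrow> real) \<Rightarrow> real" and g :: "('i \<Rightarrow> bool) \<Rightarrow> real" and k :: "('k \<Rightarrow> bool) \<Rightarrow> real"
  assumes "integrable (hash_space U) f" "integrable (coin_space I1 q1) g"
    and "integrable (coin_space I2 q2) k"
  shows integrable_ubs_model_mult:
      "integrable (ubs_model U I1 I2 q1 q2) (\<lambda>(h, c1, c2). f h * g c1 * k c2)"
    and integral_ubs_model_mult:
      "(\<integral>(h, c1, c2). f h * g c1 * k c2 \<partial>ubs_model U I1 I2 q1 q2)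
         = integral\<^sup>L (hash_space U) f * integral\<^sup>L (coin_space I1 q1) g
           * integral\<^sup>L (coin_space I2 q2) k"
proof -
  interpret C: pair_sigma_finite "coin_space I1 q1" "coin_space I2 q2"
    by (simp add: pair_sigma_finite_def prob_space_imp_sigma_finite prob_space_coin_space)
  interpret M: pair_sigma_finite "hash_space U" "coin_space I1 q1 \<Otimes>\<^sub>M coin_space I2 q2"
    by (simp add: pair_sigma_finite_def prob_space_imp_sigma_finite prob_space_coin_space
        prob_space_hash_space prob_space_pair)
  have split: "(\<lambda>(h, c1, c2). f h * g c1 * k c2)
      = (\<lambda>z. f (fst z) * (\<lambda>c. g (fst c) * k (snd c)) (snd z))"
    by (auto simp: fun_eq_iff)
  have gk: "integrable (coin_space I1 q1 \<Otimes>\<^sub>M coin_space I2 q2) (\<lambda>c. g (fst c) * k (snd c))"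
    using assms(2,3) by (rule C.integrable_pair_measure_mult)
  show "integrable (ubs_model U I1 I2 q1 q2) (\<lambda>(h, c1, c2). f h * g c1 * k c2)"
    unfolding ubs_model_def split using assms(1) gk by (rule M.integrable_pair_measure_mult)
  show "(\<integral>(h, c1, c2). f h * g c1 * k c2 \<partial>ubs_model U I1 I2 q1 q2)
      = integral\<^sup>L (hash_space U) f * integral\<^sup>L (coin_space I1 q1) g
        * integral\<^sup>L (coin_space I2 q2) k"
    unfolding ubs_model_def split M.integral_pair_measure_mult[OF assms(1) gk]
      C.integral_pair_measure_mult[OF assms(2,3)] by (simp add: mult.assoc)
qed

lemma
  assumes "finite U" "S \<subseteq> U" "0 \<le> p" "p \<le> 1"
  shows integrable_hash_space_below:
      "integrable (hash_space U) (\<lambda>h. \<Prod>v\<in>S. of_bool (h v < p) :: real)"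
    and integral_hash_space_below:
      "(\<integral>h. (\<Prod>v\<in>S. of_bool (h v < p) :: real) \<partial>hash_space U) = p ^ card S"
proof -
  interpret unit: prob_space "uniform_measure lborel {0..1::real}"
    by (rule prob_space_unit_interval)
  have below: "of_bool (y < p) = indicator {..<p} y" for y :: real
    by (simp add: indicator_def)
  have below_integrable:
    "integrable (uniform_measure lborel {0..1::real}) (indicator {..<p} :: real \<Rightarrow> real)"
    using unit.emeasure_finite[of "{..<p}"]
    by (intro integrable_real_indicator)
       (simp_all add: less_top[symmetric] del: emeasure_uniform_measure)
  have "{0..1} \<inter> {..<p} = {0..<p}"
    using assms(4) by auto
  then have measure_below: "measure (uniform_measure lborel {0..1::real}) {..<p} = p"
    using assms(3) by simp
  show "integrable (hash_space U) (\<lambda>h. \<Prod>v\<in>S. of_bool (h v < p) :: real)"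
    unfolding below
    using integrable_PiM_prod_iid[OF prob_space_unit_interval assms(1,2) below_integrable] .
  show "(\<integral>h. (\<Prod>v\<in>S. of_bool (h v < p) :: real) \<partial>hash_space U) = p ^ card S"
    unfolding below
    using integral_PiM_prod_iid[OF prob_space_unit_interval assms(1,2) below_integrable] measure_below
    by simp
qed

lemma
  assumes "finite T" "0 \<le> q" "q \<le> 1"
  shows integrable_coin_space_group_sum:
      "integrable (coin_space T q) (\<lambda>c. group_sum T J (\<lambda>t. f t * of_bool (c t)) v)"
    and integral_coin_space_group_sum:
      "(\<integral>c. group_sum T J (\<lambda>t. f t * of_bool (c t)) v \<partial>coin_space T q) = q * group_sum T J f v"
proof -
  have coin: "of_bool b = indicator {True} b" for b
    by (simp add: indicator_def)
  show "integrable (coin_space T q) (\<lambda>c. group_sum T J (\<lambda>t. f t * of_bool (c t)) v)"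
    unfolding group_sum_def coin
    by (rule integrable_PiM_indicator_sum) (auto simp: assms(1) prob_space_measure_pmf)
  show "(\<integral>c. group_sum T J (\<lambda>t. f t * of_bool (c t)) v \<partial>coin_space T q) = q * group_sum T J f v"
    unfolding group_sum_def coin
    by (subst integral_PiM_indicator_sum) (auto simp: assms measure_pmf_single prob_space_measure_pmf)
qed

lemma
  assumes "finite T" "0 \<le> q" "q \<le> 1"
  shows integrable_coin_space_group_sum_mult:
      "integrable (coin_space T q)
         (\<lambda>c. group_sum T J (\<lambda>t. f t * of_bool (c t)) v * group_sum T J (\<lambda>t. f t * of_bool (c t)) w)"
    and integral_coin_space_group_sum_mult:
      "(\<integral>c. group_sum T J (\<lambda>t. f t * of_bool (c t)) v * group_sum T J (\<lambda>t. f t * of_bool (c t)) w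
          \<partial>coin_space T q)
         = q\<^sup>2 * (group_sum T J f v * group_sum T J f w)
           + (q - q\<^sup>2) * (if v = w then group_sum T J (\<lambda>t. (f t)\<^sup>2) v else 0)"
proof -
  have coin: "of_bool b = indicator {True} b" for b
    by (simp add: indicator_def)
  have groups: "{t \<in> T. J t = v} \<inter> {t \<in> T. J t = w} = (if v = w then {t \<in> T. J t = v} else {})"
    by auto
  show "integrable (coin_space T q)
      (\<lambda>c. group_sum T J (\<lambda>t. f t * of_bool (c t)) v * group_sum T J (\<lambda>t. f t * of_bool (c t)) w)"
    unfolding group_sum_def coin
    by (rule integrable_PiM_indicator_sum_mult) (auto simp: assms(1) prob_space_measure_pmf)
  show "(\<integral>c. group_sum T J (\<lambda>t. f t * of_bool (c t)) v * group_sum T J (\<lambda>t. f t * of_bool (c t)) w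
      \<partial>coin_space T q)
    = q\<^sup>2 * (group_sum T J f v * group_sum T J f w)
      + (q - q\<^sup>2) * (if v = w then group_sum T J (\<lambda>t. (f t)\<^sup>2) v else 0)"
    unfolding group_sum_def coin
    by (subst integral_PiM_indicator_sum_mult)
       (auto simp: assms measure_pmf_single groups power2_eq_square prob_space_measure_pmf)
qed

locale ubs_join =
  fixes U :: "'u set" and T1 :: "'i set" and T2 :: "'k set"
    and J1 :: "'i \<Rightarrow> 'u" and J2 :: "'k \<Rightarrow> 'u" and W :: "'i \<Rightarrow> real"
    and p q1 q2 :: real
  assumes finite: "finite U" "finite T1" "finite T2"
    and p: "0 < p" "p \<le> 1" and q1: "0 < q1" "q1 \<le> 1" and q2: "0 < q2" "q2 \<le> 1"
begin

lemma q1_range: "0 \<le> q1" "q1 \<le> 1" and q2_range: "0 \<le> q2" "q2 \<le> 1"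
  using q1 q2 by auto

definition join_term :: "'u \<Rightarrow> ('u \<Rightarrow> real) \<times> ('i \<Rightarrow> bool) \<times> ('k \<Rightarrow> bool) \<Rightarrow> real" where
  "join_term v = (\<lambda>(h, c1, c2). of_bool (h v < p) * group_sum T1 J1 (\<lambda>t. W t * of_bool (c1 t)) v
                                 * group_sum T2 J2 (\<lambda>t. of_bool (c2 t)) v)"

lemma
  assumes "v \<in> U" "w \<in> U"
  shows integrable_join_term_mult:
      "integrable (ubs_model U T1 T2 q1 q2) (\<lambda>z. join_term v z * join_term w z)"
    and integral_join_term_mult:
      "(\<integral>z. join_term v z * join_term w z \<partial>ubs_model U T1 T2 q1 q2)
         = p ^ card {v, w}
           * (q1\<^sup>2 * (group_sum T1 J1 W v * group_sum T1 J1 W w)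
              + (q1 - q1\<^sup>2) * (if v = w then group_sum T1 J1 (\<lambda>t. (W t)\<^sup>2) v else 0))
           * (q2\<^sup>2 * (group_sum T2 J2 (\<lambda>_. 1) v * group_sum T2 J2 (\<lambda>_. 1) w)
              + (q2 - q2\<^sup>2) * (if v = w then group_sum T2 J2 (\<lambda>_. 1) v else 0))"
proof -
  let ?X = "\<lambda>v c. group_sum T1 J1 (\<lambda>t. W t * of_bool (c t)) v"
  let ?Y = "\<lambda>v c. group_sum T2 J2 (\<lambda>t. of_bool (c t)) v"
  have product: "(\<lambda>z. join_term v z * join_term w z)
      = (\<lambda>(h, c1, c2). (\<Prod>u\<in>{v, w}. of_bool (h u < p)) * (?X v c1 * ?X w c1) * (?Y v c2 * ?Y w c2))"
    by (cases "v = w") (auto simp: join_term_def fun_eq_iff)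
  have hash: "integrable (hash_space U) (\<lambda>h. \<Prod>u\<in>{v, w}. of_bool (h u < p) :: real)"
    "(\<integral>h. (\<Prod>u\<in>{v, w}. of_bool (h u < p) :: real) \<partial>hash_space U) = p ^ card {v, w}"
    using finite(1) assms p by (auto intro: integrable_hash_space_below integral_hash_space_below)
  note coin1 = integrable_coin_space_group_sum_mult[OF finite(2) q1_range]
    integral_coin_space_group_sum_mult[OF finite(2) q1_range]
  note coin2 = integrable_coin_space_group_sum_mult[OF finite(3) q2_range, of J2 "\<lambda>_. 1", simplified]
    integral_coin_space_group_sum_mult[OF finite(3) q2_range, of J2 "\<lambda>_. 1", simplified]
  show "integrable (ubs_model U T1 T2 q1 q2) (\<lambda>z. join_term v z * join_term w z)"
    unfolding product by (rule integrable_ubs_model_mult[OF hash(1) coin1(1) coin2(1)])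
  show "(\<integral>z. join_term v z * join_term w z \<partial>ubs_model U T1 T2 q1 q2)
      = p ^ card {v, w}
        * (q1\<^sup>2 * (group_sum T1 J1 W v * group_sum T1 J1 W w)
           + (q1 - q1\<^sup>2) * (if v = w then group_sum T1 J1 (\<lambda>t. (W t)\<^sup>2) v else 0))
        * (q2\<^sup>2 * (group_sum T2 J2 (\<lambda>_. 1) v * group_sum T2 J2 (\<lambda>_. 1) w)
           + (q2 - q2\<^sup>2) * (if v = w then group_sum T2 J2 (\<lambda>_. 1) v else 0))"
    unfolding product integral_ubs_model_mult[OF hash(1) coin1(1) coin2(1)] hash(2) coin1(2) coin2(2)
    by simp
qed

lemma
  assumes "v \<in> U"
  shows integrable_join_term: "integrable (ubs_model U T1 T2 q1 q2) (join_term v)"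
    and integral_join_term:
      "(\<integral>z. join_term v z \<partial>ubs_model U T1 T2 q1 q2)
         = p * (q1 * group_sum T1 J1 W v) * (q2 * group_sum T2 J2 (\<lambda>_. 1) v)"
proof -
  have hash: "integrable (hash_space U) (\<lambda>h. of_bool (h v < p) :: real)"
    "(\<integral>h. (of_bool (h v < p) :: real) \<partial>hash_space U) = p"
    using integrable_hash_space_below[OF finite(1), of "{v}" p]
      integral_hash_space_below[OF finite(1), of "{v}" p] assms p
    by simp_all
  note coin1 = integrable_coin_space_group_sum[OF finite(2) q1_range]
    integral_coin_space_group_sum[OF finite(2) q1_range]
  note coin2 = integrable_coin_space_group_sum[OF finite(3) q2_range, of J2 "\<lambda>_. 1", simplified]
    integral_coin_space_group_sum[OF finite(3) q2_range, of J2 "\<lambda>_. 1", simplified]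
  show "integrable (ubs_model U T1 T2 q1 q2) (join_term v)"
    unfolding join_term_def by (rule integrable_ubs_model_mult[OF hash(1) coin1(1) coin2(1)])
  show "(\<integral>z. join_term v z \<partial>ubs_model U T1 T2 q1 q2)
      = p * (q1 * group_sum T1 J1 W v) * (q2 * group_sum T2 J2 (\<lambda>_. 1) v)"
    unfolding join_term_def integral_ubs_model_mult[OF hash(1) coin1(1) coin2(1)]
      hash(2) coin1(2) coin2(2)
    by simp
qed

lemma variance_join_terms:
  defines "A \<equiv> group_sum T1 J1 W" and "S \<equiv> group_sum T1 J1 (\<lambda>t. (W t)\<^sup>2)"
    and "b \<equiv> group_sum T2 J2 (\<lambda>_. 1)"
  shows "prob_space.variance (ubs_model U T1 T2 q1 q2)
      (\<lambda>z. 1 / (p * q1 * q2) * (\<Sum>v\<in>U. join_term v z))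
    = (1 - q2) / (p * q2) * (\<Sum>v\<in>U. (A v)\<^sup>2 * b v)
      + (1 - q1) / (p * q1) * (\<Sum>v\<in>U. S v * (b v)\<^sup>2)
      + (1 - q1) * (1 - q2) / (p * q1 * q2) * (\<Sum>v\<in>U. S v * b v)
      + (1 - p) / p * (\<Sum>v\<in>U. (A v)\<^sup>2 * (b v)\<^sup>2)"
proof -
  interpret M: prob_space "ubs_model U T1 T2 q1 q2"
    by (rule prob_space_ubs_model)
  have uncorrelated: "M.expectation (\<lambda>z. join_term v z * join_term w z)
      = M.expectation (join_term v) * M.expectation (join_term w)" if "v \<in> U" "w \<in> U" "v \<noteq> w" for v w
    using that by (simp add: integral_join_term_mult integral_join_term power2_eq_square)
  have variance_term: "M.variance (join_term v)
      = p * (q1\<^sup>2 * (A v)\<^sup>2 + (q1 - q1\<^sup>2) * S v) * (q2\<^sup>2 * (b v)\<^sup>2 + (q2 - q2\<^sup>2) * b v)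
        - (p * q1 * q2 * A v * b v)\<^sup>2" if "v \<in> U" for v
    using that M.variance_eq[OF integrable_join_term
        integrable_join_term_mult[of v v, folded power2_eq_square]]
    by (simp add: integral_join_term_mult integral_join_term A_def S_def b_def power2_eq_square mult_ac)
  have per_value: "(1 / (p * q1 * q2))\<^sup>2 * M.variance (join_term v)
      = (1 - q2) / (p * q2) * ((A v)\<^sup>2 * b v) + (1 - q1) / (p * q1) * (S v * (b v)\<^sup>2)
        + (1 - q1) * (1 - q2) / (p * q1 * q2) * (S v * b v) + (1 - p) / p * ((A v)\<^sup>2 * (b v)\<^sup>2)"
    if "v \<in> U" for v
    using p q1 q2 unfolding variance_term[OF that] by (simp add: field_simps power2_eq_square)
  have "M.variance (\<lambda>z. \<Sum>v\<in>U. join_term v z) = (\<Sum>v\<in>U. M.variance (join_term v))"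
    by (rule M.variance_sum_uncorrelated[OF finite(1) integrable_join_term integrable_join_term_mult
          uncorrelated])
  then have "M.variance (\<lambda>z. 1 / (p * q1 * q2) * (\<Sum>v\<in>U. join_term v z))
      = (1 / (p * q1 * q2))\<^sup>2 * (\<Sum>v\<in>U. M.variance (join_term v))"
    by (simp only: M.variance_const_mult)
  also have "\<dots> = (\<Sum>v\<in>U. (1 / (p * q1 * q2))\<^sup>2 * M.variance (join_term v))"
    by (rule sum_distrib_left)
  also have "\<dots> = (1 - q2) / (p * q2) * (\<Sum>v\<in>U. (A v)\<^sup>2 * b v)
      + (1 - q1) / (p * q1) * (\<Sum>v\<in>U. S v * (b v)\<^sup>2)
      + (1 - q1) * (1 - q2) / (p * q1 * q2) * (\<Sum>v\<in>U. S v * b v)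
      + (1 - p) / p * (\<Sum>v\<in>U. (A v)\<^sup>2 * (b v)\<^sup>2)"
    by (simp add: per_value sum.distrib sum_distrib_left)
  finally show ?thesis .
qed

end

theorem lemma5:
  fixes U :: "'u set" and T1 :: "'i set" and T2 :: "'k set"
    and J1 :: "'i \<Rightarrow> 'u" and J2 :: "'k \<Rightarrow> 'u" and W :: "'i \<Rightarrow> real"
    and p1 q1 p2 q2 :: real
  assumes "finite U" "finite T1" "finite T2"
    and "\<forall>t\<in>T1. J1 t \<in> U" "\<forall>t\<in>T2. J2 t \<in> U"
    and "0 < p1" "p1 \<le> 1" "0 < q1" "q1 \<le> 1"
    and "0 < p2" "p2 \<le> 1" "0 < q2" "q2 \<le> 1"
  defines "p \<equiv> min p1 p2"
  defines "M \<equiv> ubs_model U T1 T2 q1 q2"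
    and "Jsum \<equiv> (\<lambda>(h, c1, c2).
           1 / (p * q1 * q2) *
           (\<Sum>(t1, t2)\<in>join (UBS p1 h c1 T1 J1) J1 (UBS p2 h c2 T2 J2) J2. W t1))"
    and "a \<equiv> cnt T1 J1" and "b \<equiv> cnt T2 J2"
    and "\<mu> \<equiv> grp_mean T1 J1 W" and "\<sigma>2 \<equiv> grp_var T1 J1 W"
  defines "\<beta>1 \<equiv> (\<Sum>v\<in>U. (a v)\<^sup>2 * (\<mu> v)\<^sup>2 * b v)"
    and "\<beta>2 \<equiv> (\<Sum>v\<in>U. a v * ((\<mu> v)\<^sup>2 + \<sigma>2 v) * (b v)\<^sup>2)"
    and "\<beta>3 \<equiv> (\<Sum>v\<in>U. a v * ((\<mu> v)\<^sup>2 + \<sigma>2 v) * b v)"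
    and "\<beta>4 \<equiv> (\<Sum>v\<in>U. (a v)\<^sup>2 * (\<mu> v)\<^sup>2 * (b v)\<^sup>2)"
  shows "prob_space.variance M Jsum =
           (1 - q2) / (p * q2) * \<beta>1 + (1 - q1) / (p * q1) * \<beta>2
         + (1 - q1) * (1 - q2) / (p * q1 * q2) * \<beta>3 + (1 - p) / p * \<beta>4"
proof -
  interpret ubs_join U T1 T2 J1 J2 W p q1 q2
    using assms(1-3,6-13) by unfold_locales (auto simp: p_def)
  have Jsum_eq: "Jsum = (\<lambda>z. 1 / (p * q1 * q2) * (\<Sum>v\<in>U. join_term v z))"
    using assms(1-4) by (auto simp: Jsum_def join_term_def sum_join_UBS fun_eq_iff image_subset_iff
        simp flip: p_def)
  have mean: "(a v)\<^sup>2 * (\<mu> v)\<^sup>2 = (group_sum T1 J1 W v)\<^sup>2" for v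
    by (simp add: a_def \<mu>_def cnt_mult_grp_mean[OF assms(2)] flip: power_mult_distrib)
  have second_moment: "a v * ((\<mu> v)\<^sup>2 + \<sigma>2 v) = group_sum T1 J1 (\<lambda>t. (W t)\<^sup>2) v" for v
    by (simp add: a_def \<mu>_def \<sigma>2_def cnt_mult_grp_second_moment[OF assms(2)])
  show ?thesis
    unfolding M_def Jsum_eq variance_join_terms \<beta>1_def \<beta>2_def \<beta>3_def \<beta>4_def mean second_moment
      b_def cnt_eq_group_sum ..
qed

end
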